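(* Let $0<\alpha'<2/9$, $0<\beta'<1/4$, with $\tfrac98\alpha'\ne\beta'$ and $\alpha'\neq\beta'$. Let $\mathcal{S}$ be the separability of the label-augmented model and $\mathcal{S}^{(u)}$ that of the self-supervised model. Then $\mathcal{S}-\mathcal{S}^{(u)}>0$, i.e., incorporating ID label information increases the separation between ID nodes and the semantic OOD node.
   Context: Two toy five-node models with nodes, in order: 1 = angel in sketch (ID, class angel), 2 = tiger in sketch (ID, class tiger), 3 = angel in painting (covariate OOD), 4 = tiger in painting (covariate OOD), 5 = panda (semantic OOD); parameters $\alpha'=\alpha/\rho$, $\beta'=\beta/\rho$ (first-order approximation of an augmentation graph with $\eta_u=5,\eta_l=1$). Label-augmented model: $M=\begin{pmatrix}1-2\beta'-\frac32\alpha'&2\beta'&\frac{3}{\sqrt2}\alpha'&0&0\\2\beta'&1-2\beta'-\frac32\alpha'&0&\frac3{\sqrt2}\alpha'&0\\\frac3{\sqrt2}\alpha'&0&1-2\beta'-3\alpha'&2\beta'&0\\0&\frac3{\sqrt2}\alpha'&2\beta'&1-2\beta'-3\alpha'&0\\0&0&0&0&1\end{pmatrix}$, $C=7+12\beta'+12\alpha'$, $\Delta=\sqrt{C}\,\mathrm{diag}\big(\tfrac{1}{\sqrt2}(1-\beta'-\tfrac34\alpha'),\tfrac1{\sqrt2}(1-\beta'-\tfrac34\alpha'),1-\beta'-\tfrac32\alpha',1-\beta'-\tfrac32\alpha',1\big)$. Self-supervised model: $M_u=\begin{pmatrix}1-2\beta'-2\alpha'&2\beta'&2\alpha'&0&0\\2\beta'&1-2\beta'-2\alpha'&0&2\alpha'&0\\2\alpha'&0&1-2\beta'-2\alpha'&2\beta'&0\\0&2\alpha'&2\beta'&1-2\beta'-2\alpha'&0\\0&0&0&0&1\end{pmatrix}$,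 $C_u=5+8\beta'+8\alpha'$, $\Delta_u=\sqrt{C_u}\,\mathrm{diag}(1-\beta'-\alpha',1-\beta'-\alpha',1-\beta'-\alpha',1-\beta'-\alpha',1)$. For a model $(M,\Delta)$: let $V$ have orthonormal columns spanning eigenvectors for the three largest eigenvalues of $M$, $\Sigma$ the diagonal matrix of those eigenvalues, $Z=\Delta V\Sigma^{1/2}$ with rows $z_i^\top$, and separability $\tfrac12(\|z_1-z_5\|_2^2+\|z_2-z_5\|_2^2)$. *)

theory Defs
  imports Complex_Main
begin

text \<open>Conventions: nodes 1..5 of the paper are indexed 0..4 here. A 5x5 matrix is a
function nat => nat => real (only entries with indices < 5 matter), a vector in R^5 is a
function nat => real (only indices < 5 matter). The parameters a, b stand for
alpha' and beta'.\<close>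

definition mv5 :: "(nat \<Rightarrow> nat \<Rightarrow> real) \<Rightarrow> (nat \<Rightarrow> real) \<Rightarrow> nat \<Rightarrow> real" where
  "mv5 M v i = (\<Sum>j<5. M i j * v j)"

definition dot5 :: "(nat \<Rightarrow> real) \<Rightarrow> (nat \<Rightarrow> real) \<Rightarrow> real" where
  "dot5 u v = (\<Sum>i<5. u i * v i)"

definition M_lab :: "real \<Rightarrow> real \<Rightarrow> nat \<Rightarrow> nat \<Rightarrow> real" where
  "M_lab a b i j =
    [[1 - 2*b - 3/2*a, 2*b, 3/sqrt 2*a, 0, 0],
     [2*b, 1 - 2*b - 3/2*a, 0, 3/sqrt 2*a, 0],
     [3/sqrt 2*a, 0, 1 - 2*b - 3*a, 2*b, 0],
     [0, 3/sqrt 2*a, 2*b, 1 - 2*b - 3*a, 0],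
     [0, 0, 0, 0, 1]] ! i ! j"

definition C_lab :: "real \<Rightarrow> real \<Rightarrow> real" where
  "C_lab a b = 7 + 12*b + 12*a"

definition D_lab :: "real \<Rightarrow> real \<Rightarrow> nat \<Rightarrow> real" where
  "D_lab a b i = sqrt (C_lab a b) *
    [1/sqrt 2*(1 - b - 3/4*a), 1/sqrt 2*(1 - b - 3/4*a), 1 - b - 3/2*a, 1 - b - 3/2*a, 1] ! i"

definition M_self :: "real \<Rightarrow> real \<Rightarrow> nat \<Rightarrow> nat \<Rightarrow> real" where
  "M_self a b i j =
    [[1 - 2*b - 2*a, 2*b, 2*a, 0, 0],
     [2*b, 1 - 2*b - 2*a, 0, 2*a, 0],
     [2*a, 0, 1 - 2*b - 2*a, 2*b, 0],
     [0, 2*a, 2*b, 1 - 2*b - 2*a, 0],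
     [0, 0, 0, 0, 1]] ! i ! j"

definition C_self :: "real \<Rightarrow> real \<Rightarrow> real" where
  "C_self a b = 5 + 8*b + 8*a"

definition D_self :: "real \<Rightarrow> real \<Rightarrow> nat \<Rightarrow> real" where
  "D_self a b i = sqrt (C_self a b) *
    [1 - b - a, 1 - b - a, 1 - b - a, 1 - b - a, 1] ! i"

text \<open>V (5x3, column k = V i k) has orthonormal columns that are eigenvectors of M for the
three largest eigenvalues lam 0, lam 1, lam 2 (counted with multiplicity): they are the first
three vectors of an orthonormal eigenbasis U 0..U 4 of R^5 whose eigenvalues mu are sorted
in non-increasing order.\<close>
definition top3_eig :: "(nat \<Rightarrow> nat \<Rightarrow> real) \<Rightarrow> (nat \<Rightarrow> nat \<Rightarrow> real) \<Rightarrow> (nat \<Rightarrow> real) \<Rightarrow> bool" where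
  "top3_eig M V lam \<longleftrightarrow>
    (\<exists>(U :: nat \<Rightarrow> nat \<Rightarrow> real) (mu :: nat \<Rightarrow> real).
       (\<forall>k<5. \<forall>l<5. dot5 (U k) (U l) = (if k = l then 1 else 0)) \<and>
       (\<forall>k<5. \<forall>i<5. mv5 M (U k) i = mu k * U k i) \<and>
       (\<forall>k l. k \<le> l \<and> l < 5 \<longrightarrow> mu l \<le> mu k) \<and>
       (\<forall>k<3. lam k = mu k \<and> (\<forall>i<5. V i k = U k i)))"

definition Zmat :: "(nat \<Rightarrow> real) \<Rightarrow> (nat \<Rightarrow> nat \<Rightarrow> real) \<Rightarrow> (nat \<Rightarrow> real) \<Rightarrow> nat \<Rightarrow> nat \<Rightarrow> real" where
  "Zmat D V lam i k = D i * V i k * sqrt (lam k)"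

definition separability :: "(nat \<Rightarrow> real) \<Rightarrow> (nat \<Rightarrow> nat \<Rightarrow> real) \<Rightarrow> (nat \<Rightarrow> real) \<Rightarrow> real" where
  "separability D V lam =
    1/2 * ((\<Sum>k<3. (Zmat D V lam 0 k - Zmat D V lam 4 k)^2) +
           (\<Sum>k<3. (Zmat D V lam 1 k - Zmat D V lam 4 k)^2))"

end

theory Submission
  imports Defs "HOL-Combinatorics.Permutations"
begin

text \<open>Both matrices are symmetric and have explicit orthogonal eigenbases: the semantic OOD node
is an isolated eigenvector for the eigenvalue 1, and the four remaining nodes are spanned by
symmetric and antisymmetric combinations, the fully symmetric one again with eigenvalue 1. Hence
for every admissible choice of V the first two columns span the eigenvalue-1 eigenspace and the
third column is, up to sign, the eigenvector of the next eigenvalue, which pins the separability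
down to a closed form in a and b. With s = a + b and t = (1 - s)^2, the self-supervised value is
at most C_u (t/2 + 1), the label-augmented one at least C (t/6 + 1), and the difference of these
bounds is (2 + 6 s + 4 (1 - t) + 6 s (1 - t)) / 3 > 0.\<close>

lemma sum_lessThan_5: "(\<Sum>j<5. f j) = f 0 + f 1 + f 2 + f 3 + f 4" for f :: "nat \<Rightarrow> real"
  by (simp add: eval_nat_numeral)

lemma less_5_cases: "(j::nat) < 5 \<longleftrightarrow> j = 0 \<or> j = 1 \<or> j = 2 \<or> j = 3 \<or> j = 4"
  by auto

lemma dot5_unit_right: "i < 5 \<Longrightarrow> dot5 u (\<lambda>j. if j = i then 1 else 0) = u i"
  by (simp add: dot5_def if_distrib cong: if_cong)

definition symmetric5 :: "(nat \<Rightarrow> nat \<Rightarrow> real) \<Rightarrow> bool" where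
  "symmetric5 M \<longleftrightarrow> (\<forall>i<5. \<forall>j<5. M i j = M j i)"

lemma dot5_mv5_symmetric:
  assumes "symmetric5 M"
  shows "dot5 w (mv5 M u) = dot5 (mv5 M w) u"
proof -
  have "dot5 w (mv5 M u) = (\<Sum>i<5. \<Sum>j<5. w i * M i j * u j)"
    by (simp add: dot5_def mv5_def sum_distrib_left mult.assoc)
  also have "\<dots> = (\<Sum>j<5. \<Sum>i<5. w i * M j i * u j)"
    using assms unfolding symmetric5_def by (subst sum.swap) (auto intro!: sum.cong)
  also have "\<dots> = dot5 (mv5 M w) u"
    by (simp add: dot5_def mv5_def sum_distrib_left mult_ac)
  finally show ?thesis .
qed

lemma eigencoord_vanishes:
  assumes "symmetric5 M" "\<forall>i<5. mv5 M w i = nu * w i" "\<forall>i<5. mv5 M u i = m * u i"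
  shows "(nu - m) * dot5 w u = 0"
proof -
  have "m * dot5 w u = dot5 w (mv5 M u)"
    using assms(3) by (simp add: dot5_def sum_distrib_left mult_ac)
  also have "\<dots> = dot5 (mv5 M w) u"
    by (rule dot5_mv5_symmetric[OF assms(1)])
  also have "\<dots> = nu * dot5 w u"
    using assms(2) by (simp add: dot5_def sum_distrib_left mult_ac)
  finally show ?thesis by (auto simp: algebra_simps)
qed

text \<open>Parseval's identity for all u, v says that w 0, ..., w 4 is an orthonormal basis.\<close>

definition eigenbasis5 ::
  "(nat \<Rightarrow> nat \<Rightarrow> real) \<Rightarrow> (nat \<Rightarrow> nat \<Rightarrow> real) \<Rightarrow> (nat \<Rightarrow> real) \<Rightarrow> bool" where
  "eigenbasis5 M w nu \<longleftrightarrow>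
     (\<forall>u v. dot5 u v = (\<Sum>j<5. dot5 (w j) u * dot5 (w j) v)) \<and>
     (\<forall>j<5. \<forall>i<5. mv5 M (w j) i = nu j * w j i)"

lemma eigenbasis5_expansion:
  assumes "eigenbasis5 M w nu" "i < 5"
  shows "u i = (\<Sum>j<5. w j i * dot5 (w j) u)"
proof -
  let ?e = "\<lambda>j. if j = i then 1 else 0"
  have "u i = dot5 u ?e" using assms(2) by (simp add: dot5_unit_right)
  also have "\<dots> = (\<Sum>j<5. dot5 (w j) u * dot5 (w j) ?e)"
    using assms(1) unfolding eigenbasis5_def by blast
  finally show ?thesis using assms(2) by (simp add: dot5_unit_right mult.commute)
qed

lemma eigenbasis5_permute:
  assumes "eigenbasis5 M w nu" "\<sigma> permutes {..<5}"
  shows "eigenbasis5 M (w \<circ> \<sigma>) (nu \<circ> \<sigma>)"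
  unfolding eigenbasis5_def
proof (intro conjI allI impI)
  fix u v
  have "dot5 u v = (\<Sum>j<5. dot5 (w j) u * dot5 (w j) v)"
    using assms(1) unfolding eigenbasis5_def by blast
  also have "\<dots> = (\<Sum>j<5. dot5 (w (\<sigma> j)) u * dot5 (w (\<sigma> j)) v)"
    using sum.permute[OF assms(2)] by (simp add: comp_def)
  finally show "dot5 u v = (\<Sum>j<5. dot5 ((w \<circ> \<sigma>) j) u * dot5 ((w \<circ> \<sigma>) j) v)"
    by simp
next
  fix j i :: nat
  assume "j < 5" "i < 5"
  then show "mv5 M ((w \<circ> \<sigma>) j) i = (nu \<circ> \<sigma>) j * (w \<circ> \<sigma>) j i"
    using assms permutes_in_image[OF assms(2)] unfolding eigenbasis5_def by simp
qed

definition normalize5 :: "(nat \<Rightarrow> real) \<Rightarrow> nat \<Rightarrow> real" where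
  "normalize5 g i = g i / sqrt (dot5 g g)"

lemma mv5_normalize5: "mv5 M (normalize5 g) i = mv5 M g i / sqrt (dot5 g g)"
  by (simp add: mv5_def normalize5_def sum_divide_distrib)

lemma dot5_normalize5_mult:
  "dot5 (normalize5 g) u * dot5 (normalize5 g) v = dot5 g u * dot5 g v / dot5 g g"
proof -
  have "0 \<le> dot5 g g" by (simp add: dot5_def sum_nonneg)
  moreover have "dot5 (normalize5 g) u = dot5 g u / sqrt (dot5 g g)" for u
    by (simp add: dot5_def normalize5_def sum_divide_distrib)
  ultimately show ?thesis by (simp add: power2_eq_square[symmetric])
qed

lemma eigenbasis5_normalize5:
  assumes "\<forall>u v. dot5 u v = (\<Sum>j<5. dot5 (g j) u * dot5 (g j) v / dot5 (g j) (g j))"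
    and "\<forall>j<5. \<forall>i<5. mv5 M (g j) i = nu j * g j i"
  shows "eigenbasis5 M (\<lambda>j. normalize5 (g j)) nu"
  unfolding eigenbasis5_def
proof (intro conjI allI impI)
  show "dot5 u v = (\<Sum>j<5. dot5 (normalize5 (g j)) u * dot5 (normalize5 (g j)) v)" for u v
    unfolding dot5_normalize5_mult using assms(1) by blast
  show "mv5 M (normalize5 (g j)) i = nu j * normalize5 (g j) i" if "j < 5" "i < 5" for j i
    using assms(2) that by (simp add: mv5_normalize5 normalize5_def)
qed

lemma orthonormal_rows_imp_orthonormal_columns_2:
  fixes p0 p1 q0 q1 :: real
  assumes "p0^2 + p1^2 = 1" "q0^2 + q1^2 = 1" "p0 * q0 + p1 * q1 = 0"
  shows "p0^2 + q0^2 = 1" "p1^2 + q1^2 = 1" "p0 * p1 + q0 * q1 = 0"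
proof -
  define d where "d = p0 * q1 - p1 * q0"
  have "d^2 = (p0^2 + p1^2) * (q0^2 + q1^2) - (p0 * q0 + p1 * q1)^2"
    unfolding d_def by algebra
  then have d2: "d^2 = 1" using assms by simp
  have "q0 = q0 * (p0^2 + p1^2)" using assms by simp
  also have "\<dots> = p0 * (p0 * q0 + p1 * q1) - d * p1" unfolding d_def by algebra
  finally have q0: "q0 = - d * p1" using assms by simp
  have "q1 = q1 * (p0^2 + p1^2)" using assms by simp
  also have "\<dots> = p1 * (p0 * q0 + p1 * q1) + d * p0" unfolding d_def by algebra
  finally have q1: "q1 = d * p0" using assms by simp
  show "p0^2 + q0^2 = 1" "p1^2 + q1^2 = 1" "p0 * p1 + q0 * q1 = 0"
    using assms(1) d2 d2[unfolded power2_eq_square] unfolding q0 q1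
    by (simp_all add: algebra_simps power_mult_distrib)
qed

lemma no_three_orthonormal_vectors_in_plane:
  fixes p0 p1 q0 q1 r0 r1 :: real
  assumes "p0^2 + p1^2 = 1" "q0^2 + q1^2 = 1" "r0^2 + r1^2 = 1"
    and "p0 * q0 + p1 * q1 = 0" "p0 * r0 + p1 * r1 = 0" "q0 * r0 + q1 * r1 = 0"
  shows False
proof -
  note cols = orthonormal_rows_imp_orthonormal_columns_2[OF assms(1,2,4)]
  have "r0 = r0 * (p0^2 + q0^2) + r1 * (p0 * p1 + q0 * q1)" using cols by simp
  also have "\<dots> = p0 * (p0 * r0 + p1 * r1) + q0 * (q0 * r0 + q1 * r1)" by algebra
  finally have "r0 = 0" using assms by simp
  have "r1 = r0 * (p0 * p1 + q0 * q1) + r1 * (p1^2 + q1^2)" using cols by simp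
  also have "\<dots> = p1 * (p0 * r0 + p1 * r1) + q1 * (q0 * r0 + q1 * r1)" by algebra
  finally have "r1 = 0" using assms by simp
  with \<open>r0 = 0\<close> assms(3) show False by simp
qed

text \<open>Row k of c holds the coordinates of the k-th vector of an orthonormal eigenbasis with
sorted eigenvalues mu, taken with respect to a second orthonormal eigenbasis with eigenvalues nu.\<close>

locale sorted_eigencoords =
  fixes c :: "nat \<Rightarrow> nat \<Rightarrow> real" and mu nu :: "nat \<Rightarrow> real"
  assumes orthonormal:
      "\<And>k l. k < 5 \<Longrightarrow> l < 5 \<Longrightarrow> (\<Sum>j<5. c k j * c l j) = (if k = l then 1 else 0)"
    and eigen: "\<And>k j. k < 5 \<Longrightarrow> j < 5 \<Longrightarrow> (nu j - mu k) * c k j = 0"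
    and sorted: "\<And>k l. k \<le> l \<Longrightarrow> l < 5 \<Longrightarrow> mu l \<le> mu k"
    and spectrum: "nu 0 = 1" "nu 1 = 1" "nu 2 < 1" "nu 3 < nu 2" "nu 4 < nu 3"
begin

lemma coord_eq_0: "k < 5 \<Longrightarrow> j < 5 \<Longrightarrow> nu j \<noteq> mu k \<Longrightarrow> c k j = 0"
  using eigen by fastforce

lemma inner_eq_single_coord:
  assumes "j < 5" "\<forall>i<5. i \<noteq> j \<longrightarrow> c k i = 0"
  shows "(\<Sum>i<5. c k i * c l i) = c k j * c l j"
  using assms by (subst sum.remove[of _ j]) (auto intro!: sum.neutral)

lemma mu_in_spectrum:
  assumes "k < 5"
  shows "mu k = 1 \<or> mu k = nu 2 \<or> mu k = nu 3 \<or> mu k = nu 4"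
proof (rule ccontr)
  assume "\<not> ?thesis"
  then have "\<forall>j<5. c k j = 0"
    using coord_eq_0[OF assms] spectrum by (auto simp: less_5_cases)
  then show False using orthonormal[OF assms assms] by simp
qed

lemma simple_eigenvalue:
  assumes "2 \<le> j" "j < 5" "k < 5" "l < 5" "mu k = nu j" "mu l = nu j"
  shows "k = l"
proof (rule ccontr)
  assume "k \<noteq> l"
  have "nu i \<noteq> nu j" if "i < 5" "i \<noteq> j" for i
    using that assms(1,2) spectrum by (auto simp: less_5_cases)
  then have single: "\<forall>i<5. i \<noteq> j \<longrightarrow> c m i = 0" if "m < 5" "mu m = nu j" for m
    using coord_eq_0 that by metis
  have "c k j * c k j = 1" "c l j * c l j = 1" "c k j * c l j = 0"
    using orthonormal[of k k] orthonormal[of l l] orthonormal[of k l] \<open>k \<noteq> l\<close>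
      inner_eq_single_coord[OF assms(2) single] assms by simp_all
  then show False by (metis mult_zero_left mult_zero_right zero_neq_one mult_eq_0_iff)
qed

lemma eigenvalue_one_at_most_double:
  assumes "k < l" "l < m" "m < 5" "mu k = 1" "mu l = 1" "mu m = 1"
  shows False
proof -
  have plane: "c n 2 = 0" "c n 3 = 0" "c n 4 = 0" if "n < 5" "mu n = 1" for n
    using coord_eq_0[OF that(1)] that(2) spectrum by force+
  have "k < 5" "l < 5" "k \<noteq> l" "k \<noteq> m" "l \<noteq> m" using assms by auto
  then show False
    using orthonormal[of k k] orthonormal[of l l] orthonormal[of m m]
      orthonormal[of k l] orthonormal[of k m] orthonormal[of l m]
      plane[of k] plane[of l] plane[of m] assms
      no_three_orthonormal_vectors_in_plane[of "c k 0" "c k 1" "c l 0" "c l 1" "c m 0" "c m 1"]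
    by (simp add: sum_lessThan_5 power2_eq_square)
qed

lemma top_eigenvalues: "mu 0 = 1" "mu 1 = 1" "mu 2 = nu 2"
proof -
  have le1: "mu k \<le> 1" if "k < 5" for k
    using mu_in_spectrum[OF that] spectrum by auto
  have mu_desc: "mu 1 \<le> mu 0" "mu 2 \<le> mu 1" "mu 3 \<le> mu 2" "mu 4 \<le> mu 3"
    using sorted by simp_all
  have "mu 2 \<noteq> 1"
  proof
    assume "mu 2 = 1"
    moreover from this have "mu 0 = 1" "mu 1 = 1"
      using mu_desc le1[of 0] le1[of 1] by simp_all
    ultimately show False using eigenvalue_one_at_most_double[of 0 1 2] by simp
  qed
  then have lower: "mu k = nu 2 \<or> mu k = nu 3 \<or> mu k = nu 4" if "2 \<le> k" "k < 5" for k
    using mu_in_spectrum[OF that(2)] sorted[OF that] le1[of 2] by fastforce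
  have distinct: "mu k \<noteq> mu l" if "2 \<le> k" "k < l" "l < 5" for k l
  proof
    assume eq: "mu k = mu l"
    from lower[of k] that consider "mu k = nu 2" | "mu k = nu 3" | "mu k = nu 4" by fastforce
    then show False
      using simple_eigenvalue[of 2 k l] simple_eigenvalue[of 3 k l] simple_eigenvalue[of 4 k l]
        eq that
      by cases auto
  qed
  show mu2: "mu 2 = nu 2"
    using lower[of 2] lower[of 3] lower[of 4] distinct[of 2 3] distinct[of 3 4] mu_desc spectrum
    by (simp, elim disjE) linarith+
  show mu1: "mu 1 = 1"
    using mu_in_spectrum[of 1] simple_eigenvalue[of _ 1 2] mu_desc mu2 spectrum
    by (simp, elim disjE) force+
  show "mu 0 = 1"
    using le1[of 0] mu_desc mu1 by simp
qed

lemma top_rows_coord_eq_0: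
  assumes "k < 2" "2 \<le> j" "j < 5"
  shows "c k j = 0"
proof (rule coord_eq_0)
  have "mu k = 1" using assms(1) top_eigenvalues by (auto simp: less_2_cases_iff)
  moreover have "nu j < 1" using assms(2,3) spectrum by (auto simp: less_5_cases)
  ultimately show "nu j \<noteq> mu k" by simp
qed (use assms in auto)

lemma third_row_coord_eq_0: "j < 5 \<Longrightarrow> j \<noteq> 2 \<Longrightarrow> c 2 j = 0"
  using coord_eq_0[of 2 j] top_eigenvalues spectrum by (auto simp: less_5_cases)

lemma third_row_unit: "(c 2 2)^2 = 1"
  using orthonormal[of 2 2] inner_eq_single_coord[of 2 2 2] third_row_coord_eq_0
  by (simp add: power2_eq_square)

lemma top_block_orthonormal_columns:
  "(c 0 0)^2 + (c 1 0)^2 = 1" "(c 0 1)^2 + (c 1 1)^2 = 1" "c 0 0 * c 0 1 + c 1 0 * c 1 1 = 0"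
  using orthonormal_rows_imp_orthonormal_columns_2[of "c 0 0" "c 0 1" "c 1 0" "c 1 1"]
    orthonormal[of 0 0] orthonormal[of 1 1] orthonormal[of 0 1]
    top_rows_coord_eq_0[of 0] top_rows_coord_eq_0[of 1]
  by (simp_all add: sum_lessThan_5 power2_eq_square)

end

lemma separability_eq:
  assumes lam: "lam 0 = 1" "lam 1 = 1" "lam 2 = n" "0 \<le> n"
    and top: "\<And>k. k < 2 \<Longrightarrow> V 0 k = p * x k \<and> V 1 k = p * x k \<and> V 4 k = y k"
    and third: "V 0 2 = q0 * z" "V 1 2 = q1 * z" "V 4 2 = 0" "z^2 = 1"
    and orth: "(x 0)^2 + (x 1)^2 = 1" "(y 0)^2 + (y 1)^2 = 1" "x 0 * y 0 + x 1 * y 1 = 0"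
  shows "separability D V lam =
    ((D 0)^2 * (p^2 + n * q0^2) + (D 1)^2 * (p^2 + n * q1^2)) / 2 + (D 4)^2"
proof -
  have "separability D V lam = 1/2 * (
     (D 0 * p * x 0 - D 4 * y 0)^2 + (D 0 * p * x 1 - D 4 * y 1)^2 + (D 0 * q0)^2 * n +
     (D 1 * p * x 0 - D 4 * y 0)^2 + (D 1 * p * x 1 - D 4 * y 1)^2 + (D 1 * q1)^2 * n)"
    unfolding separability_def Zmat_def using lam top[of 0] top[of 1] third
    by (simp add: eval_nat_numeral power_mult_distrib algebra_simps)
  also have "\<dots> = ((D 0)^2 * (p^2 + n * q0^2) + (D 1)^2 * (p^2 + n * q1^2)) / 2 + (D 4)^2"
    using orth by algebra
  finally show ?thesis .
qed

lemma separability_eigenbasis: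
  assumes top: "top3_eig M V lam" and sym: "symmetric5 M" and basis: "eigenbasis5 M w nu"
    and nu: "nu 0 = 1" "nu 1 = 1" "0 \<le> nu 2" "nu 2 < 1" "nu 3 < nu 2" "nu 4 < nu 3"
    and w: "w 0 0 = 0" "w 0 1 = 0" "w 0 4 = 1" "w 1 1 = w 1 0" "w 1 4 = 0" "w 2 4 = 0"
  shows "separability D V lam =
    ((D 0)^2 * ((w 1 0)^2 + nu 2 * (w 2 0)^2) + (D 1)^2 * ((w 1 0)^2 + nu 2 * (w 2 1)^2)) / 2
    + (D 4)^2"
proof -
  obtain U mu where
    orth: "\<forall>k<5. \<forall>l<5. dot5 (U k) (U l) = (if k = l then 1 else 0)" and
    eig: "\<forall>k<5. \<forall>i<5. mv5 M (U k) i = mu k * U k i" and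
    sorted: "\<forall>k l. k \<le> l \<and> l < 5 \<longrightarrow> mu l \<le> mu k" and
    VU: "\<forall>k<3. lam k = mu k \<and> (\<forall>i<5. V i k = U k i)"
    using top unfolding top3_eig_def by blast
  define c where "c k j = dot5 (w j) (U k)" for k j
  interpret sorted_eigencoords c mu nu
  proof
    show "(\<Sum>j<5. c k j * c l j) = (if k = l then 1 else 0)" if "k < 5" "l < 5" for k l
      using basis orth that unfolding eigenbasis5_def c_def by metis
    show "(nu j - mu k) * c k j = 0" if "k < 5" "j < 5" for k j
      using eigencoord_vanishes[OF sym] basis eig that unfolding eigenbasis5_def c_def by blast
  qed (use sorted nu in auto)
  have expand: "V i k = (\<Sum>j<5. w j i * c k j)" if "i < 5" "k < 3" for i k
    using VU eigenbasis5_expansion[OF basis that(1)] that by (simp add: c_def)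
  show ?thesis
  proof (rule separability_eq)
    show "V 0 k = w 1 0 * c k 1 \<and> V 1 k = w 1 0 * c k 1 \<and> V 4 k = c k 0" if "k < 2" for k
      using expand[of _ k] top_rows_coord_eq_0[OF that] that w by (simp add: sum_lessThan_5)
    show "V 0 2 = w 2 0 * c 2 2" "V 1 2 = w 2 1 * c 2 2" "V 4 2 = 0"
      using expand[of _ 2] third_row_coord_eq_0 w by (simp_all add: sum_lessThan_5)
  qed (use VU top_eigenvalues nu third_row_unit top_block_orthonormal_columns
      in \<open>auto simp: mult.commute\<close>)
qed

definition self_eigvec :: "nat \<Rightarrow> nat \<Rightarrow> real" where
  "self_eigvec j i =
    [[0, 0, 0, 0, 1], [1, 1, 1, 1, 0], [1, 1, -1, -1, 0], [1, -1, 1, -1, 0], [1, -1, -1, 1, 0]] ! j ! i"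

definition self_spectrum :: "real \<Rightarrow> real \<Rightarrow> nat \<Rightarrow> real" where
  "self_spectrum a b j = [1, 1, 1 - 4*a, 1 - 4*b, 1 - 4*a - 4*b] ! j"

lemma symmetric5_M_self: "symmetric5 (M_self a b)"
  by (auto simp: symmetric5_def M_self_def less_5_cases)

lemma eigenbasis5_self:
  "eigenbasis5 (M_self a b) (\<lambda>j. normalize5 (self_eigvec j)) (self_spectrum a b)"
proof (rule eigenbasis5_normalize5; intro allI impI)
  let ?g = self_eigvec
  show "dot5 u v = (\<Sum>j<5. dot5 (?g j) u * dot5 (?g j) v / dot5 (?g j) (?g j))" for u v
    by (simp add: sum_lessThan_5 dot5_def self_eigvec_def field_simps)
  show "mv5 (M_self a b) (?g j) i = self_spectrum a b j * ?g j i" if "j < 5" "i < 5" for j i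
    using that
    by (auto simp: less_5_cases mv5_def sum_lessThan_5 M_self_def self_eigvec_def
        self_spectrum_def algebra_simps)
qed

definition lab_eigvec :: "nat \<Rightarrow> nat \<Rightarrow> real" where
  "lab_eigvec j i =
    [[0, 0, 0, 0, 1], [2, 2, sqrt 2, sqrt 2, 0], [1, 1, - sqrt 2, - sqrt 2, 0],
     [2, -2, sqrt 2, - sqrt 2, 0], [1, -1, - sqrt 2, sqrt 2, 0]] ! j ! i"

definition lab_spectrum :: "real \<Rightarrow> real \<Rightarrow> nat \<Rightarrow> real" where
  "lab_spectrum a b j = [1, 1, 1 - 9/2*a, 1 - 4*b, 1 - 9/2*a - 4*b] ! j"

lemma symmetric5_M_lab: "symmetric5 (M_lab a b)"
  by (auto simp: symmetric5_def M_lab_def less_5_cases)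

lemma eigenbasis5_lab:
  "eigenbasis5 (M_lab a b) (\<lambda>j. normalize5 (lab_eigvec j)) (lab_spectrum a b)"
proof (rule eigenbasis5_normalize5; intro allI impI)
  let ?g = lab_eigvec
  show "dot5 u v = (\<Sum>j<5. dot5 (?g j) u * dot5 (?g j) v / dot5 (?g j) (?g j))" for u v
    by (simp add: sum_lessThan_5 dot5_def lab_eigvec_def field_simps)
  have sqrt2: "sqrt 2 * (sqrt 2 * x) = 2 * x" for x :: real
    by (simp add: mult.assoc[symmetric])
  show "mv5 (M_lab a b) (?g j) i = lab_spectrum a b j * ?g j i" if "j < 5" "i < 5" for j i
    using that
    by (auto simp: less_5_cases mv5_def sum_lessThan_5 M_lab_def lab_eigvec_def lab_spectrum_def
        field_simps sqrt2)
qed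

lemma separability_self:
  assumes "0 < a" "a < 1/4" "0 < b" "b < 1/4" "a \<noteq> b" and top: "top3_eig (M_self a b) V lam"
  shows "separability (D_self a b) V lam =
    C_self a b * ((1 - a - b)^2 * (2 - 4 * min a b) / 4 + 1)"
proof -
  have "0 \<le> C_self a b" using assms by (simp add: C_self_def)
  \<comment> \<open>stated for \<open>Suc 0\<close>, the form the index 1 takes once the formula is simplified\<close>
  then have D: "(D_self a b 0)^2 = C_self a b * (1 - b - a)^2"
      "(D_self a b (Suc 0))^2 = C_self a b * (1 - b - a)^2" "(D_self a b 4)^2 = C_self a b"
    by (simp_all add: D_self_def power_mult_distrib)
  note basis = eigenbasis5_self[of a b]
  consider "a < b" | "b < a" using assms(5) by linarith
  then show ?thesis
  proof cases
    case 1
    then show ?thesis using assms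
      by (subst separability_eigenbasis[OF top symmetric5_M_self basis])
        (simp_all add: D self_spectrum_def normalize5_def dot5_def sum_lessThan_5 self_eigvec_def
          field_simps)
  next
    case 2
    \<comment> \<open>now 1 - 4 b is the larger simple eigenvalue, so eigenvectors 2 and 3 change places\<close>
    then show ?thesis using assms
      by (subst separability_eigenbasis[OF top symmetric5_M_self
            eigenbasis5_permute[OF basis permutes_swap_id[of 2 _ 3]]])
        (simp_all add: D self_spectrum_def normalize5_def dot5_def sum_lessThan_5 self_eigvec_def
          transpose_def field_simps)
  qed
qed

lemma separability_lab:
  assumes "0 < a" "a < 2/9" "0 < b" "b < 1/4" "9/8*a \<noteq> b" and top: "top3_eig (M_lab a b) V lam"
  shows "separability (D_lab a b) V lam = C_lab a b * ((1 - b - 3/4*a)^2 / 2 *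
     (1/3 + (if b < 9/8*a then (1 - 4*b) / 3 else (1 - 9/2*a) / 6)) + 1)"
proof -
  have "0 \<le> C_lab a b" using assms by (simp add: C_lab_def)
  then have D: "(D_lab a b 0)^2 = C_lab a b * (1 - b - 3/4*a)^2 / 2"
      "(D_lab a b (Suc 0))^2 = C_lab a b * (1 - b - 3/4*a)^2 / 2" "(D_lab a b 4)^2 = C_lab a b"
    by (simp_all add: D_lab_def power_mult_distrib power_divide)
  note basis = eigenbasis5_lab[of a b]
  consider "9/8*a < b" | "b < 9/8*a" using assms(5) by linarith
  then show ?thesis
  proof cases
    case 1
    then show ?thesis using assms
      by (subst separability_eigenbasis[OF top symmetric5_M_lab basis])
        (simp_all add: D lab_spectrum_def normalize5_def dot5_def sum_lessThan_5 lab_eigvec_def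
          power_divide field_simps)
  next
    case 2
    then show ?thesis using assms
      by (subst separability_eigenbasis[OF top symmetric5_M_lab
            eigenbasis5_permute[OF basis permutes_swap_id[of 2 _ 3]]])
        (simp_all add: D lab_spectrum_def normalize5_def dot5_def sum_lessThan_5 lab_eigvec_def
          transpose_def power_divide field_simps)
  qed
qed

lemma separability_self_le:
  assumes "0 < a" "a < 1/4" "0 < b" "b < 1/4" "a \<noteq> b" "top3_eig (M_self a b) V lam"
  shows "separability (D_self a b) V lam \<le> C_self a b * ((1 - a - b)^2 / 2 + 1)"
proof -
  have "(2 - 4 * min a b) / 4 \<le> 1 / 2"
    using assms(1,3) by simp
  then have "(1 - a - b)^2 * ((2 - 4 * min a b) / 4) \<le> (1 - a - b)^2 * (1 / 2)"
    by (intro mult_left_mono) simp_all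
  moreover have "0 \<le> C_self a b" using assms by (simp add: C_self_def)
  ultimately show ?thesis
    unfolding separability_self[OF assms] by (intro mult_left_mono) simp_all
qed

lemma separability_lab_ge:
  assumes "0 < a" "a < 2/9" "0 < b" "b < 1/4" "9/8*a \<noteq> b" "top3_eig (M_lab a b) V lam"
  shows "C_lab a b * ((1 - a - b)^2 / 6 + 1) \<le> separability (D_lab a b) V lam"
proof -
  define w where "w = (if b < 9/8*a then (1 - 4*b) / 3 else (1 - 9/2*a) / 6)"
  have "(1 - a - b)^2 \<le> (1 - b - 3/4*a)^2"
    using assms(1-4) by (intro power_mono) simp_all
  then have "(1 - a - b)^2 / 6 \<le> (1 - b - 3/4*a)^2 / 2 * (1/3)" by simp
  also have "\<dots> \<le> (1 - b - 3/4*a)^2 / 2 * (1/3 + w)"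
    using assms(2,4) by (intro mult_left_mono) (simp_all add: w_def)
  finally have "(1 - a - b)^2 / 6 \<le> (1 - b - 3/4*a)^2 / 2 * (1/3 + w)" .
  moreover have "0 \<le> C_lab a b" using assms by (simp add: C_lab_def)
  ultimately show ?thesis
    unfolding separability_lab[OF assms] w_def[symmetric] by (intro mult_left_mono) simp_all
qed

lemma separability_bound_gap:
  fixes a b :: real
  assumes "0 < a" "0 < b" "a + b < 1"
  shows "C_self a b * ((1 - a - b)^2 / 2 + 1) < C_lab a b * ((1 - a - b)^2 / 6 + 1)"
proof -
  define t where "t = (1 - a - b)^2"
  have "t \<le> 1" unfolding t_def using assms by (intro power_le_one) simp_all
  then have "0 < (2 + 6 * (a + b) + 4 * (1 - t) + 6 * (a + b) * (1 - t)) / 3"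
    using assms by (simp add: add_pos_nonneg)
  also have "\<dots> = C_lab a b * (t / 6 + 1) - C_self a b * (t / 2 + 1)"
    by (simp add: C_lab_def C_self_def field_simps)
  finally show ?thesis unfolding t_def by simp
qed

theorem theorem7:
  fixes a b :: real
  assumes "0 < a" "a < 2/9" "0 < b" "b < 1/4" "9/8*a \<noteq> b" "a \<noteq> b"
  shows "\<forall>V lam Vu lamu.
           top3_eig (M_lab a b) V lam \<longrightarrow> top3_eig (M_self a b) Vu lamu \<longrightarrow>
           separability (D_lab a b) V lam - separability (D_self a b) Vu lamu > 0"
proof (intro allI impI)
  fix V lam Vu lamu
  assume lab: "top3_eig (M_lab a b) V lam" and self: "top3_eig (M_self a b) Vu lamu"
  have "separability (D_self a b) Vu lamu \<le> C_self a b * ((1 - a - b)^2 / 2 + 1)"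
    using assms self by (intro separability_self_le) simp_all
  also have "\<dots> < C_lab a b * ((1 - a - b)^2 / 6 + 1)"
    using assms by (intro separability_bound_gap) simp_all
  also have "\<dots> \<le> separability (D_lab a b) V lam"
    using assms lab by (intro separability_lab_ge) simp_all
  finally show "separability (D_lab a b) V lam - separability (D_self a b) Vu lamu > 0"
    by simp
qed

end
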